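(* Let $\Bbbk$ be an algebraically closed field and $A$ a basic finite-dimensional unital $\Bbbk$-algebra. Let $\mathrm{F}$ be a selfadjoint endofunctor of $A\text{-}\mathrm{mod}$. If $\mathrm{F}^k=\mathrm{F}\circ\cdots\circ\mathrm{F}$ ($k$ factors) is zero for some $k\in\mathbb{N}$, then $\mathrm{F}$ is zero.
   Context: $A\text{-}\mathrm{mod}$ is the category of finite-dimensional left $A$-modules; all functors are additive and $\Bbbk$-linear. A functor is selfadjoint if it is left adjoint to itself (equivalently right adjoint to itself). "Zero" means isomorphic to the zero functor; $\mathbb{N}$ denotes the positive integers. *)

theory Defs
  imports "Jordan_Normal_Form.Matrix" "HOL-Computational_Algebra.Polynomial"
begin

definition alg_closed :: "'k::field itself \<Rightarrow> bool" where
  "alg_closed _ \<longleftrightarrow> (\<forall>p::'k poly. degree p \<ge> 1 \<longrightarrow> (\<exists>x. poly p x = 0))"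

definition fd_algebra :: "('k::field \<Rightarrow> 'a::ring_1 \<Rightarrow> 'a) \<Rightarrow> bool" where
  "fd_algebra scale \<longleftrightarrow>
     (\<exists>B. finite_dimensional_vector_space scale B) \<and>
     (\<forall>c x y. scale c (x * y) = scale c x * y \<and> scale c (x * y) = x * scale c y)"

definition left_ideal_iso :: "'a::ring_1 \<Rightarrow> 'a \<Rightarrow> bool" where
  "left_ideal_iso e f \<longleftrightarrow>
     (\<exists>h. bij_betw h {x * e | x. True} {x * f | x. True} \<and>
          (\<forall>x\<in>{x * e | x. True}. \<forall>y\<in>{x * e | x. True}. h (x + y) = h x + h y) \<and>
          (\<forall>a. \<forall>x\<in>{x * e | x. True}. h (a * x) = a * h x))"

definition idempotent :: "'a::ring_1 \<Rightarrow> bool" where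
  "idempotent e \<longleftrightarrow> e * e = e"

definition primitive_idempotent :: "'a::ring_1 \<Rightarrow> bool" where
  "primitive_idempotent e \<longleftrightarrow> idempotent e \<and> e \<noteq> 0 \<and>
     (\<forall>f g. idempotent f \<and> idempotent g \<and> f * g = 0 \<and> g * f = 0 \<and> f + g = e
            \<longrightarrow> f = 0 \<or> g = 0)"

definition basic_ring :: "'a::ring_1 itself \<Rightarrow> bool" where
  "basic_ring _ \<longleftrightarrow> (\<exists>es::'a list.
     (\<forall>i<length es. primitive_idempotent (es ! i)) \<and>
     (\<forall>i<length es. \<forall>j<length es. i \<noteq> j \<longrightarrow> es ! i * es ! j = 0) \<and>
     sum_list es = 1 \<and>
     (\<forall>i<length es. \<forall>j<length es. i \<noteq> j \<longrightarrow> \<not> left_ideal_iso (es ! i) (es ! j)))"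

text \<open>A finite-dimensional left A-module is given (up to isomorphism, via a choice of
  basis) by its dimension n and its representation rho : A -> k^{n x n}, a unital
  k-algebra homomorphism.\<close>
type_synonym ('k, 'a) amod = "nat \<times> ('a \<Rightarrow> 'k mat)"

definition is_amod :: "('k::field \<Rightarrow> 'a::ring_1 \<Rightarrow> 'a) \<Rightarrow> ('k, 'a) amod \<Rightarrow> bool" where
  "is_amod scale M \<longleftrightarrow> (case M of (n, \<rho>) \<Rightarrow>
     (\<forall>a. \<rho> a \<in> carrier_mat n n) \<and> \<rho> 1 = 1\<^sub>m n \<and>
     (\<forall>a b. \<rho> (a * b) = \<rho> a * \<rho> b) \<and>
     (\<forall>a b. \<rho> (a + b) = \<rho> a + \<rho> b) \<and>
     (\<forall>c a. \<rho> (scale c a) = c \<cdot>\<^sub>m \<rho> a))"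

definition amod_hom :: "('k::field, 'a::ring_1) amod \<Rightarrow> ('k, 'a) amod \<Rightarrow> 'k mat set" where
  "amod_hom M N = {f \<in> carrier_mat (fst N) (fst M). \<forall>a. f * snd M a = snd N a * f}"

type_synonym ('k, 'a) endofunctor =
  "(('k, 'a) amod \<Rightarrow> ('k, 'a) amod) \<times> (('k, 'a) amod \<Rightarrow> ('k, 'a) amod \<Rightarrow> 'k mat \<Rightarrow> 'k mat)"

definition is_kfunctor :: "('k::field \<Rightarrow> 'a::ring_1 \<Rightarrow> 'a) \<Rightarrow> ('k, 'a) endofunctor \<Rightarrow> bool" where
  "is_kfunctor scale F \<longleftrightarrow> (case F of (Fo, Fm) \<Rightarrow>
     (\<forall>M. is_amod scale M \<longrightarrow> is_amod scale (Fo M)) \<and>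
     (\<forall>M N f. is_amod scale M \<longrightarrow> is_amod scale N \<longrightarrow> f \<in> amod_hom M N \<longrightarrow>
        Fm M N f \<in> amod_hom (Fo M) (Fo N)) \<and>
     (\<forall>M. is_amod scale M \<longrightarrow> Fm M M (1\<^sub>m (fst M)) = 1\<^sub>m (fst (Fo M))) \<and>
     (\<forall>M N P f g. is_amod scale M \<longrightarrow> is_amod scale N \<longrightarrow> is_amod scale P \<longrightarrow>
        f \<in> amod_hom M N \<longrightarrow> g \<in> amod_hom N P \<longrightarrow> Fm M P (g * f) = Fm N P g * Fm M N f) \<and>
     (\<forall>M N f g c d. is_amod scale M \<longrightarrow> is_amod scale N \<longrightarrow>
        f \<in> amod_hom M N \<longrightarrow> g \<in> amod_hom M N \<longrightarrow>
        Fm M N (c \<cdot>\<^sub>m f + d \<cdot>\<^sub>m g) = c \<cdot>\<^sub>m Fm M N f + d \<cdot>\<^sub>m Fm M N g))"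

definition functor_comp :: "('k, 'a) endofunctor \<Rightarrow> ('k, 'a) endofunctor \<Rightarrow> ('k, 'a) endofunctor" where
  "functor_comp G F = (fst G \<circ> fst F, \<lambda>M N f. snd G (fst F M) (fst F N) (snd F M N f))"

fun functor_pow :: "('k, 'a) endofunctor \<Rightarrow> nat \<Rightarrow> ('k, 'a) endofunctor" where
  "functor_pow F 0 = (id, \<lambda>M N f. f)"
| "functor_pow F (Suc k) = functor_comp F (functor_pow F k)"

definition selfadjoint :: "('k::field \<Rightarrow> 'a::ring_1 \<Rightarrow> 'a) \<Rightarrow> ('k, 'a) endofunctor \<Rightarrow> bool" where
  "selfadjoint scale F \<longleftrightarrow> (case F of (Fo, Fm) \<Rightarrow> (\<exists>\<phi>.
     (\<forall>X Y. is_amod scale X \<longrightarrow> is_amod scale Y \<longrightarrow>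
        bij_betw (\<phi> X Y) (amod_hom (Fo X) Y) (amod_hom X (Fo Y))) \<and>
     (\<forall>X X' Y Y' f g h. is_amod scale X \<longrightarrow> is_amod scale X' \<longrightarrow>
        is_amod scale Y \<longrightarrow> is_amod scale Y' \<longrightarrow>
        f \<in> amod_hom X' X \<longrightarrow> g \<in> amod_hom Y Y' \<longrightarrow> h \<in> amod_hom (Fo X) Y \<longrightarrow>
        \<phi> X' Y' (g * h * Fm X' X f) = Fm Y Y' g * \<phi> X Y h * f)))"

text \<open>F is zero (isomorphic to the zero functor): F M is the zero module for every M.
  (Any family of maps into/out of zero modules is automatically natural.)\<close>
definition zero_functor :: "('k::field \<Rightarrow> 'a::ring_1 \<Rightarrow> 'a) \<Rightarrow> ('k, 'a) endofunctor \<Rightarrow> bool" where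
  "zero_functor scale F \<longleftrightarrow> (\<forall>M. is_amod scale M \<longrightarrow> fst (fst F M) = 0)"

end

theory Submission
  imports Defs
begin

text \<open>If \<open>F\<^sup>2 X = 0\<close>, selfadjointness gives \<open>Hom(F X, F X) \<cong> Hom(X, F\<^sup>2 X) = 0\<close>, so the identity
  of \<open>F X\<close> is zero and \<open>F X = 0\<close>. Applied to \<open>X = F\<^sup>j M\<close> this shows that \<open>F\<^bsup>j+2\<^esup> = 0\<close> implies
  \<open>F\<^bsup>j+1\<^esup> = 0\<close>, and descending from \<open>F\<^sup>k = 0\<close> yields \<open>F = 0\<close>.\<close>

lemma fst_functor_comp [simp]: "fst (functor_comp G F) M = fst G (fst F M)"
  by (simp add: functor_comp_def)

lemma is_amod_functor_obj:
  assumes "is_kfunctor scale F" "is_amod scale M"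
  shows "is_amod scale (fst F M)"
proof -
  obtain Fo Fm where "F = (Fo, Fm)" by (cases F)
  with assms show ?thesis by (simp add: is_kfunctor_def del: split_paired_All)
qed

lemma is_amod_functor_pow_obj:
  assumes "is_kfunctor scale F" "is_amod scale M"
  shows "is_amod scale (fst (functor_pow F j) M)"
  by (induction j) (simp_all add: assms(2) is_amod_functor_obj[OF assms(1)])

lemma amod_hom_into_zero_unique:
  assumes "fst N = 0" "f \<in> amod_hom M N" "g \<in> amod_hom M N"
  shows "f = g"
  using assms by (auto simp: amod_hom_def intro!: eq_matI)

lemma one_mat_amod_hom:
  assumes "is_amod scale M"
  shows "1\<^sub>m (fst M) \<in> amod_hom M M"
proof -
  obtain n \<rho> where M: "M = (n, \<rho>)" by (cases M)
  with assms have car: "\<rho> a \<in> carrier_mat n n" for a by (simp add: is_amod_def)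
  then show ?thesis by (simp add: M amod_hom_def left_mult_one_mat[OF car] right_mult_one_mat[OF car])
qed

lemma zero_mat_amod_hom:
  assumes "is_amod scale M"
  shows "0\<^sub>m (fst M) (fst M) \<in> amod_hom M M"
proof -
  obtain n \<rho> where M: "M = (n, \<rho>)" by (cases M)
  with assms have car: "\<rho> a \<in> carrier_mat n n" for a by (simp add: is_amod_def)
  then show ?thesis by (simp add: M amod_hom_def left_mult_zero_mat[OF car] right_mult_zero_mat[OF car])
qed

lemma one_mat_eq_zero_mat_imp_dim_zero:
  assumes "1\<^sub>m n = (0\<^sub>m n n :: 'a::zero_neq_one mat)"
  shows "n = 0"
proof (rule ccontr)
  assume "n \<noteq> 0"
  then have "(1\<^sub>m n :: 'a mat) $$ (0, 0) \<noteq> 0\<^sub>m n n $$ (0, 0)" by simp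
  with assms show False by simp
qed

lemma selfadjoint_obj_zero_if_square_zero:
  fixes scale :: "'k::field \<Rightarrow> 'a::ring_1 \<Rightarrow> 'a"
  assumes F: "is_kfunctor scale F" and S: "selfadjoint scale F"
    and X: "is_amod scale X" and FFX: "fst (fst F (fst F X)) = 0"
  shows "fst (fst F X) = 0"
proof -
  obtain Fo Fm where FF: "F = (Fo, Fm)" by (cases F)
  define Y where "Y = Fo X"
  have Y: "is_amod scale Y" using is_amod_functor_obj[OF F X] by (simp add: FF Y_def)
  from S X Y obtain \<phi> where \<phi>: "bij_betw \<phi> (amod_hom Y Y) (amod_hom X (Fo Y))"
    unfolding selfadjoint_def FF Y_def by fastforce
  have one: "1\<^sub>m (fst Y) \<in> amod_hom Y Y" and zero: "0\<^sub>m (fst Y) (fst Y) \<in> amod_hom Y Y"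
    using one_mat_amod_hom[OF Y] zero_mat_amod_hom[OF Y] .
  have "\<phi> (1\<^sub>m (fst Y)) = \<phi> (0\<^sub>m (fst Y) (fst Y))"
    using FFX \<phi> one zero by (intro amod_hom_into_zero_unique) (auto simp: FF Y_def bij_betw_def)
  then have "1\<^sub>m (fst Y) = (0\<^sub>m (fst Y) (fst Y) :: 'k mat)"
    using \<phi> one zero by (auto simp: bij_betw_def inj_on_def)
  then show ?thesis
    using one_mat_eq_zero_mat_imp_dim_zero by (simp add: FF Y_def)
qed

lemma selfadjoint_zero_functor_pow_Suc:
  assumes F: "is_kfunctor scale F" and S: "selfadjoint scale F"
    and "zero_functor scale (functor_pow F (Suc (Suc j)))"
  shows "zero_functor scale (functor_pow F (Suc j))"
  unfolding zero_functor_def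
proof (intro allI impI)
  fix M assume "is_amod scale M"
  moreover have "fst (fst (functor_pow F (Suc (Suc j))) M) = 0"
    using assms(3) \<open>is_amod scale M\<close> unfolding zero_functor_def by blast
  ultimately show "fst (fst (functor_pow F (Suc j)) M) = 0"
    using selfadjoint_obj_zero_if_square_zero[OF F S is_amod_functor_pow_obj[OF F]] by simp
qed

lemma selfadjoint_zero_functor_pow_descend:
  assumes "is_kfunctor scale F" "selfadjoint scale F"
    and "zero_functor scale (functor_pow F (Suc j + n))"
  shows "zero_functor scale (functor_pow F (Suc j))"
  using assms(3)
proof (induction n arbitrary: j)
  case (Suc n)
  have "Suc j + Suc n = Suc (Suc j) + n" by simp
  with Suc have "zero_functor scale (functor_pow F (Suc (Suc j)))" by metis
  then show ?case using selfadjoint_zero_functor_pow_Suc[OF assms(1,2)] by blast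
qed simp

theorem proposition21:
  fixes scale :: "'k::field \<Rightarrow> 'a::ring_1 \<Rightarrow> 'a"
    and F :: "('k, 'a) endofunctor"
  assumes "alg_closed TYPE('k)"
    and "fd_algebra scale"
    and "basic_ring TYPE('a)"
    and "is_kfunctor scale F"
    and "selfadjoint scale F"
    and "k \<ge> 1"
    and "zero_functor scale (functor_pow F k)"
  shows "zero_functor scale F"
proof -
  have "Suc 0 + (k - 1) = k" using \<open>k \<ge> 1\<close> by simp
  then have "zero_functor scale (functor_pow F (Suc 0))"
    using selfadjoint_zero_functor_pow_descend[OF assms(4,5)] assms(7) by metis
  then show ?thesis by (simp add: zero_functor_def)
qed

end
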